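(* Let $G=(V,E)$ be a graph and consider an exponential bottleneck routing game on $G$ with $N$ players, where player $\pi_i$ has a strategy set $\mathcal{P}_i$ of paths in $G$ from $u_i$ to $v_i$, and let $L=\max\{|p| : p\in \bigcup_i \mathcal{P}_i\}$ be the maximum length of a path in the players' strategy sets. Then the price of anarchy (over pure Nash-routings, with respect to the social cost $C$) satisfies $$PoA = O(\log L \cdot \log |E|),$$ i.e. for every Nash-routing $\mathbf{p}$ and every routing $\mathbf{p}^*$ minimizing the social cost, $C(\mathbf{p})/C(\mathbf{p}^* ) = O(\log L\cdot \log|E|)$, where the implied constant is absolute.
   Context: A routing (pure strategy profile) is $\mathbf{p}=[p_1,\dots,p_N]$ with $p_i\in\mathcal{P}_i$. For an edge $e$, its congestion $C_e(\mathbf{p})$ is the number of paths of $\mathbf{p}$ using $e$. The social cost is $C(\mathbf{p})=\max_{e\in E} C_e(\mathbf{p})$. In an exponential bottleneck game the cost of player $\pi_i$ is $\widetilde C_i(\mathbf{p})=\sum_{e\in p_i} 2^{C_e(\mathbf{p})}$. A routing $\mathbf{p}$ is a Nash-routing if no player can lower its cost by unilaterally changing its path to another path of its strategy set: $\widetilde C_i(\mathbf{p})\le \widetilde C_i(p_i';\mathbf{p}_{-i})$ for all $i$ and all $p_i'\in\mathcal{P}_i$. The price of anarchy is $\sup_{\mathbf{p}} C(\mathbf{p})/C^*$ over Nash-routings $\mathbf{p}$, where $C^*$ is the minimum of $C$ over all routings. Logarithms are base 2. *)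

theory Defs
  imports Complex_Main
begin

(* A finite directed multigraph G = (V,E): vertices and edges are labelled by
   natural numbers (WLOG, any finite graph is isomorphic to such a one);
   edge e goes from src e to dst e. *)
definition graph :: "nat set \<Rightarrow> nat set \<Rightarrow> (nat \<Rightarrow> nat) \<Rightarrow> (nat \<Rightarrow> nat) \<Rightarrow> bool" where
  "graph V E src dst \<longleftrightarrow> finite V \<and> finite E \<and> (\<forall>e\<in>E. src e \<in> V \<and> dst e \<in> V)"

definition is_path :: "nat set \<Rightarrow> (nat \<Rightarrow> nat) \<Rightarrow> (nat \<Rightarrow> nat) \<Rightarrow> nat \<Rightarrow> nat \<Rightarrow> nat list \<Rightarrow> bool" where
  "is_path E src dst u v p \<longleftrightarrow> set p \<subseteq> E \<and>
     (p = [] \<longrightarrow> u = v) \<and>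
     (p \<noteq> [] \<longrightarrow> src (hd p) = u \<and> dst (last p) = v \<and>
        (\<forall>j. j + 1 < length p \<longrightarrow> dst (p ! j) = src (p ! (j + 1))) \<and>
        distinct (map src p @ [dst (last p)]))"

definition routing :: "nat \<Rightarrow> (nat \<Rightarrow> nat list set) \<Rightarrow> (nat \<Rightarrow> nat list) \<Rightarrow> bool" where
  "routing N S p \<longleftrightarrow> (\<forall>i<N. p i \<in> S i)"

definition congestion :: "nat \<Rightarrow> (nat \<Rightarrow> nat list) \<Rightarrow> nat \<Rightarrow> nat" where
  "congestion N p e = card {i. i < N \<and> e \<in> set (p i)}"

definition social_cost :: "nat set \<Rightarrow> nat \<Rightarrow> (nat \<Rightarrow> nat list) \<Rightarrow> nat" where
  "social_cost E N p = Max (insert 0 (congestion N p ` E))"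

definition player_cost :: "nat \<Rightarrow> (nat \<Rightarrow> nat list) \<Rightarrow> nat \<Rightarrow> nat" where
  "player_cost N p i = (\<Sum>e\<in>set (p i). 2 ^ congestion N p e)"

definition nash_routing :: "nat \<Rightarrow> (nat \<Rightarrow> nat list set) \<Rightarrow> (nat \<Rightarrow> nat list) \<Rightarrow> bool" where
  "nash_routing N S p \<longleftrightarrow> routing N S p \<and>
     (\<forall>i<N. \<forall>q\<in>S i. player_cost N p i \<le> player_cost N (p(i := q)) i)"

definition optimal_routing :: "nat set \<Rightarrow> nat \<Rightarrow> (nat \<Rightarrow> nat list set) \<Rightarrow> (nat \<Rightarrow> nat list) \<Rightarrow> bool" where
  "optimal_routing E N S p \<longleftrightarrow> routing N S p \<and>
     (\<forall>q. routing N S q \<longrightarrow> social_cost E N p \<le> social_cost E N q)"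

definition max_path_length :: "nat \<Rightarrow> (nat \<Rightarrow> nat list set) \<Rightarrow> nat" where
  "max_path_length N S = Max (insert 0 {length q | q i. i < N \<and> q \<in> S i})"

end

theory Submission
  imports Defs
begin

text \<open>
  Summing the Nash conditions of all players against the deviations to an optimal routing
  \<open>p\<^sup>*\<close> and counting per edge gives
  \<open>\<Sum>\<^sub>e C\<^sub>e 2\<^bsup>C\<^sub>e\<^esup> \<le> 2 C\<^sup>* \<Sum>\<^sub>e 2\<^bsup>C\<^sub>e\<^esup>\<close>, since a deviating player raises
  each congestion by at most one and \<open>p\<^sup>*\<close> loads every edge at most \<open>C\<^sup>*\<close> times.
  In \<open>\<Sum>\<^sub>e (C\<^sub>e - 2C\<^sup>*) 2\<^bsup>C\<^sub>e\<^esup> \<le> 0\<close> every summand is at least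
  \<open>-2C\<^sup>* 2\<^bsup>2C\<^sup>*\<^esup>\<close>, so the summand of a most congested edge is at most
  \<open>|E| 2C\<^sup>* 2\<^bsup>2C\<^sup>*\<^esup>\<close>; hence \<open>C \<le> 2C\<^sup>* + log |E|\<close>. This even gives
  \<open>C/C\<^sup>* = O(log |E|)\<close>, without the factor \<open>log L\<close>.
\<close>

lemma sum_paths_eq_sum_congestion:
  assumes "finite E" "\<And>i. i < N \<Longrightarrow> set (q i) \<subseteq> E"
  shows "(\<Sum>i<N. \<Sum>e\<in>set (q i). f e) = (\<Sum>e\<in>E. congestion N q e * (f e :: nat))"
proof -
  have "(\<Sum>i<N. \<Sum>e\<in>set (q i). f e) = (\<Sum>i<N. \<Sum>e\<in>E. if e \<in> set (q i) then f e else 0)"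
  proof (rule sum.cong[OF refl])
    fix i assume "i \<in> {..<N}"
    then have "set (q i) = {e \<in> E. e \<in> set (q i)}" using assms(2) by auto
    then show "(\<Sum>e\<in>set (q i). f e) = (\<Sum>e\<in>E. if e \<in> set (q i) then f e else 0)"
      using sum.inter_filter[OF assms(1), of f "\<lambda>e. e \<in> set (q i)"] by simp
  qed
  also have "\<dots> = (\<Sum>e\<in>E. \<Sum>i<N. if e \<in> set (q i) then f e else 0)"
    by (rule sum.swap)
  also have "\<dots> = (\<Sum>e\<in>E. congestion N q e * f e)"
  proof (rule sum.cong[OF refl])
    fix e
    have "{i\<in>{..<N}. e \<in> set (q i)} = {i. i < N \<and> e \<in> set (q i)}" by auto
    then show "(\<Sum>i<N. if e \<in> set (q i) then f e else 0) = congestion N q e * f e"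
      by (simp add: sum.inter_filter[symmetric] congestion_def)
  qed
  finally show ?thesis .
qed

lemma congestion_fun_upd_le: "congestion N (p(i := q)) e \<le> congestion N p e + 1"
proof -
  have "{j. j < N \<and> e \<in> set ((p(i := q)) j)} \<subseteq> insert i {j. j < N \<and> e \<in> set (p j)}"
    by auto
  then have "card {j. j < N \<and> e \<in> set ((p(i := q)) j)} \<le> card (insert i {j. j < N \<and> e \<in> set (p j)})"
    by (rule card_mono[rotated]) auto
  also have "\<dots> \<le> card {j. j < N \<and> e \<in> set (p j)} + 1"
    by (simp add: card_insert_if)
  finally show ?thesis by (simp add: congestion_def)
qed

lemma nash_player_cost_le:
  assumes "nash_routing N S p" "i < N" "q \<in> S i"
  shows "player_cost N p i \<le> (\<Sum>e\<in>set q. 2 * 2 ^ congestion N p e)"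
proof -
  have "player_cost N p i \<le> (\<Sum>e\<in>set q. 2 ^ congestion N (p(i := q)) e)"
    using assms unfolding nash_routing_def by (simp add: player_cost_def)
  also have "\<dots> \<le> (\<Sum>e\<in>set q. 2 ^ (congestion N p e + 1))"
    by (intro sum_mono power_increasing congestion_fun_upd_le) auto
  finally show ?thesis by simp
qed

lemma congestion_le_social_cost:
  assumes "finite E" "e \<in> E"
  shows "congestion N q e \<le> social_cost E N q"
  unfolding social_cost_def using assms by (intro Max_ge) auto

lemma social_cost_attained:
  assumes "finite E" "social_cost E N q \<noteq> 0"
  obtains e where "e \<in> E" "congestion N q e = social_cost E N q"
proof -
  have "social_cost E N q \<in> insert 0 (congestion N q ` E)"
    unfolding social_cost_def using assms(1) by (intro Max_in) auto
  with assms(2) show thesis using that by auto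
qed

lemma nash_exp_congestion_bound:
  assumes fin: "finite E"
    and paths: "\<And>i q. i < N \<Longrightarrow> q \<in> S i \<Longrightarrow> set q \<subseteq> E"
    and nash: "nash_routing N S p" and routing: "routing N S q"
  shows "(\<Sum>e\<in>E. congestion N p e * 2 ^ congestion N p e)
           \<le> (\<Sum>e\<in>E. 2 * social_cost E N q * 2 ^ congestion N p e)"
proof -
  have p_sub: "\<And>i. i < N \<Longrightarrow> set (p i) \<subseteq> E" and q_sub: "\<And>i. i < N \<Longrightarrow> set (q i) \<subseteq> E"
    using nash routing paths by (auto simp: nash_routing_def routing_def)
  have "(\<Sum>e\<in>E. congestion N p e * 2 ^ congestion N p e) = (\<Sum>i<N. player_cost N p i)"
    unfolding player_cost_def using sum_paths_eq_sum_congestion[OF fin p_sub] by simp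
  also have "\<dots> \<le> (\<Sum>i<N. \<Sum>e\<in>set (q i). 2 * 2 ^ congestion N p e)"
    using routing by (intro sum_mono nash_player_cost_le[OF nash]) (auto simp: routing_def)
  also have "\<dots> = (\<Sum>e\<in>E. congestion N q e * (2 * 2 ^ congestion N p e))"
    by (rule sum_paths_eq_sum_congestion[OF fin q_sub])
  also have "\<dots> \<le> (\<Sum>e\<in>E. 2 * social_cost E N q * 2 ^ congestion N p e)"
    using congestion_le_social_cost[OF fin] by (intro sum_mono) (simp add: mult_right_mono)
  finally show ?thesis .
qed

lemma exp_excess_lower_bound: "- (int k * 2 ^ k) \<le> (int c - int k) * 2 ^ c"
proof (cases "k \<le> c")
  case True
  then have "0 \<le> (int c - int k) * 2 ^ c" by simp
  moreover have "0 \<le> int k * 2 ^ k" by simp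
  ultimately show ?thesis by linarith
next
  case False
  then have "(int k - int c) * 2 ^ c \<le> int k * 2 ^ k"
    by (intro mult_mono power_increasing) auto
  then show ?thesis by (simp add: algebra_simps)
qed

lemma exp_excess_le_card:
  fixes c :: "'a \<Rightarrow> nat"
  assumes fin: "finite E" and e0: "e0 \<in> E"
    and sum_le: "(\<Sum>e\<in>E. c e * 2 ^ c e) \<le> (\<Sum>e\<in>E. k * 2 ^ c e)"
  shows "(int (c e0) - int k) * 2 ^ c e0 \<le> int (card E) * (int k * 2 ^ k)"
proof -
  let ?g = "\<lambda>e. (int (c e) - int k) * 2 ^ c e"
  have "int (\<Sum>e\<in>E. c e * 2 ^ c e) \<le> int (\<Sum>e\<in>E. k * 2 ^ c e)"
    using sum_le by (simp only: of_nat_le_iff)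
  then have "(\<Sum>e\<in>E. ?g e) \<le> 0"
    by (simp add: algebra_simps sum_subtractf)
  then have "?g e0 + (\<Sum>e\<in>E - {e0}. ?g e) \<le> 0"
    using fin e0 by (simp add: sum.remove)
  moreover have "(\<Sum>e\<in>E - {e0}. - (int k * 2 ^ k)) \<le> (\<Sum>e\<in>E - {e0}. ?g e)"
    by (intro sum_mono exp_excess_lower_bound)
  moreover have "int (card E - 1) * (int k * 2 ^ k) \<le> int (card E) * (int k * 2 ^ k)"
    by (intro mult_right_mono) auto
  ultimately show ?thesis using fin e0 by simp
qed

lemma le_of_exp_excess_le:
  fixes C D m :: nat
  assumes excess: "(int C - int (2 * D)) * 2 ^ C \<le> int m * (int (2 * D) * 2 ^ (2 * D))"
  shows "real C \<le> 4 * max 1 (log 2 (real m)) * real D"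
proof (cases "C \<le> 4 * D")
  case True
  have "real C * 1 \<le> 4 * real D * max 1 (log 2 (real m))"
    using True by (intro mult_mono) auto
  then show ?thesis by (simp add: mult_ac)
next
  case False
  then have "D > 0"
    using excess by (cases "D = 0") (auto simp: mult_le_0_iff)
  have "int (2 * D) * 2 ^ C \<le> (int C - int (2 * D)) * 2 ^ C"
    using False by (intro mult_right_mono) auto
  then have "int (2 * D) * 2 ^ C \<le> int (2 * D) * (int m * 2 ^ (2 * D))"
    using excess by (simp only: mult.left_commute[of "int m"])
  with \<open>D > 0\<close> have "int (2 ^ C) \<le> int (m * 2 ^ (2 * D))"
    by simp
  moreover have "(2::nat) ^ C = 2 ^ (C - 2 * D) * 2 ^ (2 * D)"
    using False by (simp add: power_add[symmetric])
  ultimately have pow_le: "2 ^ (C - 2 * D) \<le> m"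
    by (simp only: of_nat_le_iff) simp
  have "real C \<le> 2 * real D + log 2 (real m)"
    using le_log2_of_power[OF pow_le] False by (simp add: of_nat_diff)
  also have "\<dots> \<le> 2 * real D * max 1 (log 2 (real m)) + 2 * real D * max 1 (log 2 (real m))"
  proof -
    have "2 * real D * 1 \<le> 2 * real D * max 1 (log 2 (real m))"
      by (intro mult_left_mono) auto
    moreover have "1 * max 1 (log 2 (real m)) \<le> 2 * real D * max 1 (log 2 (real m))"
      using \<open>D > 0\<close> by (intro mult_right_mono) auto
    ultimately show ?thesis by linarith
  qed
  finally show ?thesis by (simp add: mult_ac)
qed

theorem mainTheorem1:
  "\<exists>K::real. \<forall>V E src dst N S u v p pstar.
     graph V E src dst \<and>
     (\<forall>i<N. S i \<noteq> {} \<and> (\<forall>q\<in>S i. is_path E src dst (u i) (v i) q)) \<and>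
     nash_routing N S p \<and> optimal_routing E N S pstar \<longrightarrow>
     real (social_cost E N p) \<le>
       K * max 1 (log 2 (real (max_path_length N S))) * max 1 (log 2 (real (card E)))
         * real (social_cost E N pstar)"
proof (rule exI[of _ 4], intro allI impI, elim conjE)
  fix V E src dst N S u v p pstar
  assume "graph V E src dst"
    and strategies: "\<forall>i<N. S i \<noteq> {} \<and> (\<forall>q\<in>S i. is_path E src dst (u i) (v i) q)"
    and nash: "nash_routing N S p" and opt: "optimal_routing E N S pstar"
  then have fin: "finite E" by (simp add: graph_def)
  let ?C = "social_cost E N p" and ?D = "social_cost E N pstar"
  let ?a = "max 1 (log 2 (real (max_path_length N S)))"
  let ?b = "max 1 (log 2 (real (card E)))"
  have "real ?C \<le> 4 * ?b * real ?D"
  proof (cases "?C = 0")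
    case False
    then obtain e0 where e0: "e0 \<in> E" "congestion N p e0 = ?C"
      using social_cost_attained[OF fin] by blast
    have "(\<Sum>e\<in>E. congestion N p e * 2 ^ congestion N p e)
            \<le> (\<Sum>e\<in>E. 2 * ?D * 2 ^ congestion N p e)"
      using strategies opt
      by (intro nash_exp_congestion_bound[OF fin _ nash])
        (auto simp: is_path_def optimal_routing_def)
    from exp_excess_le_card[OF fin e0(1) this]
    have "(int ?C - int (2 * ?D)) * 2 ^ ?C \<le> int (card E) * (int (2 * ?D) * 2 ^ (2 * ?D))"
      by (simp only: e0(2))
    then show ?thesis by (rule le_of_exp_excess_le)
  qed simp
  also have "\<dots> \<le> 4 * ?a * ?b * real ?D"
    by (simp add: mult_right_mono)
  finally show "real ?C \<le> 4 * ?a * ?b * real ?D" .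
qed

end
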